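(* Let $n,N,M$ be non-negative integers with $M\le N\le 2n-3$, and let $f$ be an $(n,N,M)$ $\mathbf{F}$-sequence with $M<N$ or $N<2n-3$. Then: 1. If $M<N-2$, setting $f_{N,M+1}$ to $f_{N-1,N-1}-1$ if $f_{N-1,M+1}=f_{N-1,N-1}$, and otherwise to either of $L_f(N,M+1)$ or $U_f(N,M+1)$, yields an $(n,N,M+1)$ $\mathbf{F}$-sequence. 2. If $M=N-2$, setting $f_{N,N-1}=f_{N-1,N-1}-1$ yields an $(n,N,N-1)$ $\mathbf{F}$-sequence. 3. If $M=N-1$, setting $f_{N,N}=f_{N-1,N-1}-1$ when $f_{N-1,N-1}>1$, or setting $f_{N,N}=f_{N-1,N-1}+1$ when $f_{N-1,N-1}<2n-N-1$, in either case yields an $(n,N,N)$ $\mathbf{F}$-sequence. 4. If $M=N$, setting $f_{N+1,0}$ to $f_{N,N}-1$ if $f_{N,0}=f_{N,N}$, and otherwise to either of $\max(0,f_{N,0}-1)$ or $f_{N,0}$, yields an $(n,N+1,0)$ $\mathbf{F}$-sequence.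
   Context: For a doubly indexed sequence (or matrix) $f$, define, with the convention that $f_{k,\ell}=0$ whenever $k$ or $\ell$ is negative, $$L_f(i,j):=\max\bigl(f_{i,j-1},\ f_{i-1,j}-1,\ f_{i,j-1}+f_{i-1,j}-f_{i-1,j-1}-1\bigr),\qquad U_f(i,j):=\min\bigl(f_{i-1,j},\ f_{i,j-1}+f_{i-1,j}-f_{i-1,j-1}\bigr).$$ Let $n,N,M$ be non-negative integers with $M\le N\le 2n-3$ and put $B=\max(N-1,M)$. An $(n,N,M)$ $\mathbf{F}$-sequence is a doubly indexed sequence $f_{i,j}$ of non-negative integers defined exactly for the ("valid") indices $(i,j)$ in $\{(i,j):0\le j\le i\le N-1\}\cup\{(N,j):0\le j\le M\}$, such that: (1) the diagonal entries $f_{i,i}$, $0\le i\le B$, are positive integers with $f_{0,0}=2$, $f_{i,i}=f_{i-1,i-1}\pm1$ for $1\le i\le B$, and $f_{i,i}\le 2n-i-2$ for $0\le i\le B$; (2) $L_f(i,j)\le f_{i,j}\le U_f(i,j)$ for all valid indices $(i,j)$ with $0\le j\le i-2$; (3) for all valid indices $(i,j)$ with $0\le j\le i-1$, if $f_{i-1,j}=f_{i-1,i-1}$ then $f_{i,j}=f_{i-1,i-1}-1$. *)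

theory Defs
  imports Main
begin

text \<open>A doubly indexed sequence is a function f :: nat => nat => int; only its values
  at valid indices matter.\<close>

definition fx :: "(nat \<Rightarrow> nat \<Rightarrow> int) \<Rightarrow> int \<Rightarrow> int \<Rightarrow> int" where
  "fx f k l = (if k < 0 \<or> l < 0 then 0 else f (nat k) (nat l))"

definition Lf :: "(nat \<Rightarrow> nat \<Rightarrow> int) \<Rightarrow> nat \<Rightarrow> nat \<Rightarrow> int" where
  "Lf f i j = max (fx f (int i) (int j - 1))
               (max (fx f (int i - 1) (int j) - 1)
                    (fx f (int i) (int j - 1) + fx f (int i - 1) (int j)
                       - fx f (int i - 1) (int j - 1) - 1))"

definition Uf :: "(nat \<Rightarrow> nat \<Rightarrow> int) \<Rightarrow> nat \<Rightarrow> nat \<Rightarrow> int" where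
  "Uf f i j = min (fx f (int i - 1) (int j))
               (fx f (int i) (int j - 1) + fx f (int i - 1) (int j)
                  - fx f (int i - 1) (int j - 1))"

definition valid :: "nat \<Rightarrow> nat \<Rightarrow> nat \<Rightarrow> nat \<Rightarrow> bool" where
  "valid N M i j \<longleftrightarrow> (j \<le> i \<and> i + 1 \<le> N) \<or> (i = N \<and> j \<le> M)"

text \<open>B = max(N-1, M); for N = 0 the truncated subtraction gives max 0 M = M = max(-1, M).\<close>
definition Bnd :: "nat \<Rightarrow> nat \<Rightarrow> nat" where
  "Bnd N M = max (N - 1) M"

definition Fseq :: "nat \<Rightarrow> nat \<Rightarrow> nat \<Rightarrow> (nat \<Rightarrow> nat \<Rightarrow> int) \<Rightarrow> bool" where
  "Fseq n N M f \<longleftrightarrow>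
     (\<forall>i j. valid N M i j \<longrightarrow> f i j \<ge> 0) \<and>
     \<comment> \<open>(1) diagonal\<close>
     f 0 0 = 2 \<and>
     (\<forall>i \<le> Bnd N M. f i i > 0 \<and> f i i \<le> 2 * int n - int i - 2) \<and>
     (\<forall>i. 1 \<le> i \<and> i \<le> Bnd N M \<longrightarrow>
            f i i = f (i - 1) (i - 1) + 1 \<or> f i i = f (i - 1) (i - 1) - 1) \<and>
     \<comment> \<open>(2) interval condition for j <= i - 2\<close>
     (\<forall>i j. valid N M i j \<and> j + 2 \<le> i \<longrightarrow> Lf f i j \<le> f i j \<and> f i j \<le> Uf f i j) \<and>
     \<comment> \<open>(3) forced value\<close>
     (\<forall>i j. valid N M i j \<and> j + 1 \<le> i \<longrightarrow>
            f (i - 1) j = f (i - 1) (i - 1) \<longrightarrow> f i j = f (i - 1) (i - 1) - 1)"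

definition setf :: "(nat \<Rightarrow> nat \<Rightarrow> int) \<Rightarrow> nat \<Rightarrow> nat \<Rightarrow> int \<Rightarrow> (nat \<Rightarrow> nat \<Rightarrow> int)" where
  "setf f i j v = f(i := (f i)(j := v))"

end

theory Submission
  imports Defs
begin

text \<open>Each extension adds the index that follows all valid indices in row-major order.
  L_f, U_f and the forced-value condition at an index only read entries at earlier indices, so
  every condition at an old index survives and only the new entry has to be checked. For it, two
  invariants of F-sequences suffice: an entry strictly below the diagonal is smaller than the
  diagonal entry of the previous row, and rows are weakly increasing up to the subdiagonal. With
  f(i-1,j) - 1 <= f(i,j) <= f(i-1,j) they make the interval [L_f, U_f] nonempty and put the forced
  value f(N-1,N-1) - 1 into it. On the diagonal f(i,i) + i is always even, which sharpens the
  strict bound on a new diagonal entry to the required one.\<close>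

lemma fx_setf: "(k, l) \<noteq> (int p, int q) \<Longrightarrow> fx (setf f p q v) k l = fx f k l"
  unfolding fx_def setf_def by auto

lemma setf_same [simp]: "setf f p q v p q = v"
  by (simp add: setf_def)

lemma setf_other [simp]: "(i, j) \<noteq> (p, q) \<Longrightarrow> setf f p q v i j = f i j"
  by (auto simp: setf_def)

lemma Lf_eq:
  "1 \<le> i \<Longrightarrow> 1 \<le> j \<Longrightarrow>
   Lf f i j = max (f i (j - 1))
                (max (f (i - 1) j - 1) (f i (j - 1) + f (i - 1) j - f (i - 1) (j - 1) - 1))"
  by (simp add: Lf_def fx_def nat_diff_distrib)

lemma Uf_eq:
  "1 \<le> i \<Longrightarrow> 1 \<le> j \<Longrightarrow>
   Uf f i j = min (f (i - 1) j) (f i (j - 1) + f (i - 1) j - f (i - 1) (j - 1))"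
  by (simp add: Uf_def fx_def nat_diff_distrib)

lemma Lf_col0: "1 \<le> i \<Longrightarrow> Lf f i 0 = max 0 (f (i - 1) 0 - 1)"
  by (simp add: Lf_def fx_def nat_diff_distrib)

lemma Uf_col0: "1 \<le> i \<Longrightarrow> Uf f i 0 = f (i - 1) 0"
  by (simp add: Uf_def fx_def nat_diff_distrib)

lemma Uf_le_above: "1 \<le> i \<Longrightarrow> Uf f i j \<le> f (i - 1) j"
  by (cases "j = 0") (simp_all add: Uf_eq Uf_col0)

lemma Lf_ge_above: "1 \<le> i \<Longrightarrow> f (i - 1) j - 1 \<le> Lf f i j"
  by (cases "j = 0") (simp_all add: Lf_eq Lf_col0 le_max_iff_disj)

lemma Lf_ge_left: "1 \<le> j \<Longrightarrow> f i (j - 1) \<le> Lf f i j"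
  by (simp add: Lf_def fx_def nat_diff_distrib)

lemma Lf_setf: "i < p \<or> i = p \<and> j \<le> q \<Longrightarrow> Lf (setf f p q v) i j = Lf f i j"
  by (auto simp: Lf_def fx_setf)

lemma Uf_setf: "i < p \<or> i = p \<and> j \<le> q \<Longrightarrow> Uf (setf f p q v) i j = Uf f i j"
  by (auto simp: Uf_def fx_setf)

definition diagonal_walk :: "nat \<Rightarrow> nat \<Rightarrow> (nat \<Rightarrow> nat \<Rightarrow> int) \<Rightarrow> bool" where
  "diagonal_walk n B f \<longleftrightarrow>
     f 0 0 = 2 \<and>
     (\<forall>i \<le> B. f i i > 0 \<and> f i i \<le> 2 * int n - int i - 2) \<and>
     (\<forall>i. 1 \<le> i \<and> i \<le> B \<longrightarrow>
        f i i = f (i - 1) (i - 1) + 1 \<or> f i i = f (i - 1) (i - 1) - 1)"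

lemma diagonal_walk_step:
  "diagonal_walk n B f \<Longrightarrow> 1 \<le> i \<Longrightarrow> i \<le> B \<Longrightarrow>
   f i i = f (i - 1) (i - 1) + 1 \<or> f i i = f (i - 1) (i - 1) - 1"
  by (simp add: diagonal_walk_def)

lemma diagonal_walk_setf_off_diagonal:
  assumes "p \<noteq> q"
  shows "diagonal_walk n B (setf f p q v) \<longleftrightarrow> diagonal_walk n B f"
proof -
  have "setf f p q v i i = f i i" for i
    using assms by (auto simp: setf_def)
  then show ?thesis
    by (simp add: diagonal_walk_def)
qed

lemma diagonal_walk_extend:
  assumes walk: "diagonal_walk n B f" and "0 < v" and "v \<le> 2 * int n - int (Suc B) - 2"
    and "v = f B B + 1 \<or> v = f B B - 1"
  shows "diagonal_walk n (Suc B) (setf f (Suc B) (Suc B) v)"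
proof -
  let ?g = "setf f (Suc B) (Suc B) v"
  have old: "?g i i = f i i" if "i \<le> B" for i
    using that by simp
  have "?g 0 0 = 2"
    using walk old[of 0] by (simp add: diagonal_walk_def)
  moreover have "0 < ?g i i \<and> ?g i i \<le> 2 * int n - int i - 2" if "i \<le> Suc B" for i
    using that walk assms(2,3) old unfolding diagonal_walk_def le_Suc_eq by auto
  moreover have "?g i i = ?g (i - 1) (i - 1) + 1 \<or> ?g i i = ?g (i - 1) (i - 1) - 1"
    if "1 \<le> i" "i \<le> Suc B" for i
    using that diagonal_walk_step[OF walk, of i] assms(4) old[of "i - 1"] old[of i]
    unfolding le_Suc_eq by auto
  ultimately show ?thesis
    unfolding diagonal_walk_def by blast
qed

lemma diagonal_walk_parity:
  assumes "diagonal_walk n B f" and "i \<le> B"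
  shows "even (f i i + int i)"
  using assms(2)
proof (induction i)
  case 0
  then show ?case using assms(1) by (simp add: diagonal_walk_def)
next
  case (Suc i)
  then show ?case using diagonal_walk_step[OF assms(1), of "Suc i"] by auto
qed

lemma Fseq_nonneg: "Fseq n N M f \<Longrightarrow> valid N M i j \<Longrightarrow> 0 \<le> f i j"
  by (simp add: Fseq_def)

lemma Fseq_diagonal_walk: "Fseq n N M f \<Longrightarrow> diagonal_walk n (Bnd N M) f"
  by (simp add: Fseq_def diagonal_walk_def)

lemma Fseq_interval:
  "Fseq n N M f \<Longrightarrow> valid N M i j \<Longrightarrow> j + 2 \<le> i \<Longrightarrow>
   Lf f i j \<le> f i j \<and> f i j \<le> Uf f i j"
  by (simp add: Fseq_def)

lemma Fseq_forced:
  "Fseq n N M f \<Longrightarrow> valid N M i j \<Longrightarrow> j < i \<Longrightarrow> f (i - 1) j = f (i - 1) (i - 1) \<Longrightarrow>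
   f i j = f (i - 1) (i - 1) - 1"
  by (simp add: Fseq_def)

lemma Fseq_diagonal_bounds:
  "Fseq n N M f \<Longrightarrow> i \<le> Bnd N M \<Longrightarrow> 0 < f i i \<and> f i i \<le> 2 * int n - int i - 2"
  by (simp add: Fseq_def)

lemma Fseq_below_diagonal:
  assumes F: "Fseq n N M f" and "valid N M i j" and "j < i"
  shows "f i j < f (i - 1) (i - 1)"
  using assms(2,3)
proof (induction i arbitrary: j)
  case 0
  then show ?case by simp
next
  case (Suc k)
  show ?case
  proof (cases "j = k")
    case True
    then show ?thesis using Fseq_forced[OF F Suc.prems] by simp
  next
    case False
    with Suc.prems have "j < k" and valid: "valid N M k j" and "k \<le> Bnd N M"
      by (auto simp: valid_def Bnd_def)
    have "f k j < f (k - 1) (k - 1)"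
      using Suc.IH[OF valid \<open>j < k\<close>] .
    moreover have "f (k - 1) (k - 1) \<le> f k k + 1"
      using diagonal_walk_step[OF Fseq_diagonal_walk[OF F], of k] \<open>j < k\<close>
        \<open>k \<le> Bnd N M\<close> by auto
    ultimately have "f k j \<le> f k k" by simp
    moreover have "f (Suc k) j \<le> f k j"
      using Fseq_interval[OF F Suc.prems(1)] Uf_le_above[of "Suc k" f j] \<open>j < k\<close> by simp
    moreover have "f k j = f k k \<Longrightarrow> f (Suc k) j = f k k - 1"
      using Fseq_forced[OF F Suc.prems] by simp
    ultimately show ?thesis by fastforce
  qed
qed

lemma Fseq_row_mono:
  assumes F: "Fseq n N M f" and valid: "valid N M i (Suc j)" and "Suc j < i"
  shows "f i j \<le> f i (Suc j)"
proof (cases "j + 3 \<le> i")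
  case True
  then show ?thesis using Fseq_interval[OF F valid] Lf_ge_left[of "Suc j" f i] by simp
next
  case False
  then have "i = j + 2" using \<open>Suc j < i\<close> by simp
  then have "f i (Suc j) = f (i - 1) (i - 1) - 1"
    using Fseq_forced[OF F valid] by simp
  moreover have "valid N M i j"
    using valid by (auto simp: valid_def)
  then have "f i j < f (i - 1) (i - 1)"
    using Fseq_below_diagonal[OF F] \<open>Suc j < i\<close> by simp
  ultimately show ?thesis by simp
qed

lemma Fseq_near_above:
  assumes F: "Fseq n N M f" and "valid N M i j" and "j + 2 \<le> i"
  shows "f (i - 1) j - 1 \<le> f i j \<and> f i j \<le> f (i - 1) j"
  using Fseq_interval[OF assms] Lf_ge_above[of i f j] Uf_le_above[of i f j] assms(3) by simp

lemma Fseq_extend: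
  assumes F: "Fseq n N M f"
    and valid_new: "\<And>i j. valid N' M' i j \<longleftrightarrow> valid N M i j \<or> (i, j) = (p, q)"
    and before: "\<And>i j. valid N M i j \<Longrightarrow> i < p \<or> i = p \<and> j < q"
    and walk: "diagonal_walk n (Bnd N' M') (setf f p q v)"
    and "0 \<le> v"
    and interval: "q + 2 \<le> p \<Longrightarrow> Lf f p q \<le> v \<and> v \<le> Uf f p q"
    and forced: "q < p \<Longrightarrow> f (p - 1) q = f (p - 1) (p - 1) \<Longrightarrow> v = f (p - 1) (p - 1) - 1"
  shows "Fseq n N' M' (setf f p q v)"
proof -
  let ?g = "setf f p q v"
  have g_old: "?g i j = f i j" if "valid N M i j" for i j
    using before[OF that] by auto
  have LU_old: "Lf ?g i j = Lf f i j \<and> Uf ?g i j = Uf f i j"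
    if "i < p \<or> i = p \<and> j \<le> q" for i j
    using that by (simp add: Lf_setf Uf_setf)
  have cases_new: thesis
    if "valid N' M' i j" "valid N M i j \<Longrightarrow> thesis" "i = p \<Longrightarrow> j = q \<Longrightarrow> thesis" for i j thesis
    using that valid_new by blast
  have nonneg: "0 \<le> ?g i j" if "valid N' M' i j" for i j
    using that(1)
  proof (rule cases_new)
    assume "valid N M i j"
    then show ?thesis using g_old Fseq_nonneg[OF F] by simp
  qed (simp add: \<open>0 \<le> v\<close>)
  have interval_g: "Lf ?g i j \<le> ?g i j \<and> ?g i j \<le> Uf ?g i j"
    if "valid N' M' i j" "j + 2 \<le> i" for i j
    using that(1)
  proof (rule cases_new)
    assume old: "valid N M i j"
    then have "i < p \<or> i = p \<and> j \<le> q"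
      using before by fastforce
    then show ?thesis
      using g_old[OF old] LU_old Fseq_interval[OF F old that(2)] by simp
  qed (use that(2) interval LU_old in simp)
  have forced_g: "?g i j = ?g (i - 1) (i - 1) - 1"
    if "valid N' M' i j" "j + 1 \<le> i" "?g (i - 1) j = ?g (i - 1) (i - 1)" for i j
  proof -
    have "i - 1 < p"
      using that(1,2) valid_new before by fastforce
    then have above: "?g (i - 1) j = f (i - 1) j" "?g (i - 1) (i - 1) = f (i - 1) (i - 1)"
      by simp_all
    from that(1) show ?thesis
    proof (rule cases_new)
      assume "valid N M i j"
      then show ?thesis using g_old Fseq_forced[OF F] that(2,3) above by auto
    qed (use that(2,3) above forced in auto)
  qed
  show ?thesis
    using walk nonneg interval_g forced_g unfolding Fseq_def diagonal_walk_def by blast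
qed

lemma Fseq_extend_row:
  assumes F: "Fseq n N M f" and "M + 2 \<le> N"
    and v: "if f (N - 1) (M + 1) = f (N - 1) (N - 1) then v = f (N - 1) (N - 1) - 1
            else Lf f N (M + 1) \<le> v \<and> v \<le> Uf f N (M + 1)"
  shows "Fseq n N (M + 1) (setf f N (M + 1) v)"
proof -
  let ?d = "f (N - 1) (N - 1)"
  have valid: "valid N M N M"
    by (simp add: valid_def)
  have "0 < ?d"
    using Fseq_diagonal_bounds[OF F, of "N - 1"] by (simp add: Bnd_def)
  have below: "f N M < ?d"
    using Fseq_below_diagonal[OF F valid] \<open>M + 2 \<le> N\<close> by simp
  have near: "f (N - 1) M - 1 \<le> f N M \<and> f N M \<le> f (N - 1) M"
    using Fseq_near_above[OF F valid] \<open>M + 2 \<le> N\<close> by simp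
  have LU: "Lf f N (M + 1) = max (f N M) (max (f (N - 1) (M + 1) - 1)
              (f N M + f (N - 1) (M + 1) - f (N - 1) M - 1))"
    "Uf f N (M + 1) = min (f (N - 1) (M + 1)) (f N M + f (N - 1) (M + 1) - f (N - 1) M)"
    using Lf_eq[of N "M + 1" f] Uf_eq[of N "M + 1" f] \<open>M + 2 \<le> N\<close> by simp_all
  have admissible: "0 \<le> v \<and> Lf f N (M + 1) \<le> v \<and> v \<le> Uf f N (M + 1)"
    if "M + 3 \<le> N"
  proof (cases "f (N - 1) (M + 1) = ?d")
    case True
    then show ?thesis
      using v \<open>0 < ?d\<close> below near unfolding LU by auto
  next
    case False
    then show ?thesis
      using v Fseq_nonneg[OF F valid] Lf_ge_left[of "M + 1" f N] by simp
  qed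
  show ?thesis
  proof (rule Fseq_extend[OF F])
    show "valid N (M + 1) i j \<longleftrightarrow> valid N M i j \<or> (i, j) = (N, M + 1)" for i j
      using \<open>M + 2 \<le> N\<close> by (auto simp: valid_def)
    show "i < N \<or> i = N \<and> j < M + 1" if "valid N M i j" for i j
      using that by (auto simp: valid_def)
    have "Bnd N (M + 1) = Bnd N M"
      using \<open>M + 2 \<le> N\<close> by (simp add: Bnd_def)
    then show "diagonal_walk n (Bnd N (M + 1)) (setf f N (M + 1) v)"
      using Fseq_diagonal_walk[OF F] diagonal_walk_setf_off_diagonal \<open>M + 2 \<le> N\<close> by simp
    show "0 \<le> v"
    proof (cases "M + 3 \<le> N")
      case True
      then show ?thesis using admissible by simp
    next
      case False
      then have "M + 1 = N - 1"
        using \<open>M + 2 \<le> N\<close> by simp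
      then show ?thesis using v \<open>0 < ?d\<close> by simp
    qed
    show "Lf f N (M + 1) \<le> v \<and> v \<le> Uf f N (M + 1)" if "M + 1 + 2 \<le> N"
      using admissible that by simp
    show "v = ?d - 1" if "f (N - 1) (M + 1) = ?d"
      using v that by simp
  qed
qed

lemma Fseq_Lf_le_Uf:
  assumes F: "Fseq n N M f" and "M + 2 < N"
  shows "Lf f N (M + 1) \<le> Uf f N (M + 1)"
proof -
  have "f (N - 1) M - 1 \<le> f N M \<and> f N M \<le> f (N - 1) M"
    using Fseq_near_above[OF F, of N M] \<open>M + 2 < N\<close> by (simp add: valid_def)
  moreover have "f (N - 1) M \<le> f (N - 1) (M + 1)"
    using Fseq_row_mono[OF F, of "N - 1" M] \<open>M + 2 < N\<close> by (simp add: valid_def)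
  ultimately show ?thesis
    using Lf_eq[of N "M + 1" f] Uf_eq[of N "M + 1" f] \<open>M + 2 < N\<close> by simp
qed

lemma Fseq_extend_diagonal:
  assumes F: "Fseq n N M f" and "M + 1 = N" and "0 < v" and "v + int N < 2 * int n"
    and step: "v = f (N - 1) (N - 1) + 1 \<or> v = f (N - 1) (N - 1) - 1"
  shows "Fseq n N N (setf f N N v)"
proof (rule Fseq_extend[OF F])
  have N: "N = Suc M"
    using \<open>M + 1 = N\<close> by simp
  have walk: "diagonal_walk n M f"
    using Fseq_diagonal_walk[OF F] by (simp add: N Bnd_def)
  have "even (f M M + int M)"
    using diagonal_walk_parity[OF walk] by simp
  then have "even (v + int N)"
    using step by (auto simp: N)
  then obtain k where "v + int N = 2 * k"
    by (rule evenE)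
  then have "v \<le> 2 * int n - int N - 2"
    using \<open>v + int N < 2 * int n\<close> by simp
  then show "diagonal_walk n (Bnd N N) (setf f N N v)"
    using diagonal_walk_extend[OF walk \<open>0 < v\<close>] step by (simp add: N Bnd_def)
qed (use \<open>M + 1 = N\<close> \<open>0 < v\<close> in \<open>auto simp: valid_def\<close>)

lemma Fseq_extend_new_row:
  assumes F: "Fseq n N N f"
    and v: "if f N 0 = f N N then v = f N N - 1
            else Lf f (N + 1) 0 \<le> v \<and> v \<le> Uf f (N + 1) 0"
  shows "Fseq n (N + 1) 0 (setf f (N + 1) 0 v)"
proof (rule Fseq_extend[OF F])
  have "0 < f N N"
    using Fseq_diagonal_bounds[OF F, of N] by (simp add: Bnd_def)
  moreover have LU: "Lf f (N + 1) 0 = max 0 (f N 0 - 1)" "Uf f (N + 1) 0 = f N 0"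
    by (simp_all add: Lf_col0 Uf_col0)
  ultimately show "0 \<le> v" and "Lf f (N + 1) 0 \<le> v \<and> v \<le> Uf f (N + 1) 0"
    using v by (auto split: if_splits)
  show "diagonal_walk n (Bnd (N + 1) 0) (setf f (N + 1) 0 v)"
    using Fseq_diagonal_walk[OF F] diagonal_walk_setf_off_diagonal by (simp add: Bnd_def)
qed (use v in \<open>auto simp: valid_def\<close>)

theorem proposition1:
  fixes n N M :: nat and f :: "nat \<Rightarrow> nat \<Rightarrow> int"
  assumes "M \<le> N" and "int N \<le> 2 * int n - 3"
    and "Fseq n N M f"
    and "M < N \<or> int N < 2 * int n - 3"
  shows
    "(M + 2 < N \<longrightarrow>
        (f (N - 1) (M + 1) = f (N - 1) (N - 1) \<longrightarrow>
           Fseq n N (M + 1) (setf f N (M + 1) (f (N - 1) (N - 1) - 1))) \<and>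
        (f (N - 1) (M + 1) \<noteq> f (N - 1) (N - 1) \<longrightarrow>
           Fseq n N (M + 1) (setf f N (M + 1) (Lf f N (M + 1))) \<and>
           Fseq n N (M + 1) (setf f N (M + 1) (Uf f N (M + 1))))) \<and>
     (M + 2 = N \<longrightarrow>
        Fseq n N (N - 1) (setf f N (N - 1) (f (N - 1) (N - 1) - 1))) \<and>
     (M + 1 = N \<longrightarrow>
        (f (N - 1) (N - 1) > 1 \<longrightarrow>
           Fseq n N N (setf f N N (f (N - 1) (N - 1) - 1))) \<and>
        (f (N - 1) (N - 1) < 2 * int n - int N - 1 \<longrightarrow>
           Fseq n N N (setf f N N (f (N - 1) (N - 1) + 1)))) \<and>
     (M = N \<longrightarrow>
        (f N 0 = f N N \<longrightarrow>
           Fseq n (N + 1) 0 (setf f (N + 1) 0 (f N N - 1))) \<and>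
        (f N 0 \<noteq> f N N \<longrightarrow>
           Fseq n (N + 1) 0 (setf f (N + 1) 0 (max 0 (f N 0 - 1))) \<and>
           Fseq n (N + 1) 0 (setf f (N + 1) 0 (f N 0))))"
proof -
  \<comment> \<open>The bounds on M and N are not needed: each case carries its own admissibility hypothesis.\<close>
  note F = \<open>Fseq n N M f\<close>
  have d: "0 < f (N - 1) (N - 1)" "f (N - 1) (N - 1) \<le> 2 * int n - int (N - 1) - 2"
    using Fseq_diagonal_bounds[OF F, of "N - 1"] by (simp_all add: Bnd_def)
  show ?thesis
  proof (intro conjI impI)
    assume "M + 2 < N" "f (N - 1) (M + 1) = f (N - 1) (N - 1)"
    then show "Fseq n N (M + 1) (setf f N (M + 1) (f (N - 1) (N - 1) - 1))"
      by (intro Fseq_extend_row[OF F]) simp_all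
  next
    assume "M + 2 < N" "f (N - 1) (M + 1) \<noteq> f (N - 1) (N - 1)"
    then show "Fseq n N (M + 1) (setf f N (M + 1) (Lf f N (M + 1)))"
      and "Fseq n N (M + 1) (setf f N (M + 1) (Uf f N (M + 1)))"
      using Fseq_Lf_le_Uf[OF F] Fseq_extend_row[OF F, of "Lf f N (M + 1)"]
        Fseq_extend_row[OF F, of "Uf f N (M + 1)"] by simp_all
  next
    assume "M + 2 = N"
    then have "N - 1 = M + 1"
      by simp
    then show "Fseq n N (N - 1) (setf f N (N - 1) (f (N - 1) (N - 1) - 1))"
      using Fseq_extend_row[OF F, of "f (M + 1) (M + 1) - 1"] \<open>M + 2 = N\<close> by simp
  next
    assume "M + 1 = N" "1 < f (N - 1) (N - 1)"
    then show "Fseq n N N (setf f N N (f (N - 1) (N - 1) - 1))"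
      using d by (intro Fseq_extend_diagonal[OF F]) auto
  next
    assume "M + 1 = N" "f (N - 1) (N - 1) < 2 * int n - int N - 1"
    then show "Fseq n N N (setf f N N (f (N - 1) (N - 1) + 1))"
      using d by (intro Fseq_extend_diagonal[OF F]) auto
  next
    assume "M = N" "f N 0 = f N N"
    then show "Fseq n (N + 1) 0 (setf f (N + 1) 0 (f N N - 1))"
      using F by (intro Fseq_extend_new_row) simp_all
  next
    assume "M = N" "f N 0 \<noteq> f N N"
    then have F': "Fseq n N N f" and "0 \<le> f N 0"
      using F Fseq_nonneg[OF F, of N 0] by (simp_all add: valid_def)
    then show "Fseq n (N + 1) 0 (setf f (N + 1) 0 (max 0 (f N 0 - 1)))"
      and "Fseq n (N + 1) 0 (setf f (N + 1) 0 (f N 0))"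
      using \<open>f N 0 \<noteq> f N N\<close> Fseq_extend_new_row[OF F', of "max 0 (f N 0 - 1)"]
        Fseq_extend_new_row[OF F', of "f N 0"] by (simp_all add: Lf_col0 Uf_col0)
  qed
qed
end
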